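(* Let $G$ be a connected graph and let $P$ and $Q$ be two distinct pendent paths in $G$ with origins $u$ and $v$, respectively (possibly $u=v$). Let $x$ be the neighbor of $u$ lying on $P$, and let $y$ be the pendent (degree-one) end vertex of $Q$. Let $G' = G - ux + xy$ (delete the edge $ux$ and add the edge $xy$). Then $SO(G) > SO(G')$.
   Context: For a graph $G$, $d_G(w)$ denotes the degree of vertex $w$, and the Sombor index is $SO(G)=\sum_{ab\in E(G)}\sqrt{d_G(a)^2+d_G(b)^2}$. A pendent path in $G$ is a path $P=u u_1 u_2\cdots u_k$ ($k\ge 1$) in $G$ such that $d_G(u)\ge 3$, $d_G(u_k)=1$ and $d_G(u_i)=2$ for $i=1,\dots,k-1$; the vertex $u$ is its origin and $k$ its length. For an edge $e$, $G-e$ denotes deletion of $e$; for nonadjacent vertices $a,b$, $G+ab$ denotes adding the edge $ab$. *)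

theory Defs
  imports Complex_Main
begin

definition simple_graph :: "'a set \<Rightarrow> 'a set set \<Rightarrow> bool" where
  "simple_graph V E \<longleftrightarrow> finite V \<and>
     (\<forall>e\<in>E. \<exists>a b. a \<noteq> b \<and> e = {a, b} \<and> a \<in> V \<and> b \<in> V)"

definition adj_rel :: "'a set set \<Rightarrow> ('a \<times> 'a) set" where
  "adj_rel E = {(a, b). {a, b} \<in> E}"

definition connected_graph :: "'a set \<Rightarrow> 'a set set \<Rightarrow> bool" where
  "connected_graph V E \<longleftrightarrow> (\<forall>a\<in>V. \<forall>b\<in>V. (a, b) \<in> (adj_rel E)\<^sup>*)"

definition deg :: "'a set set \<Rightarrow> 'a \<Rightarrow> nat" where
  "deg E w = card {e \<in> E. w \<in> e}"

definition sombor :: "'a set set \<Rightarrow> real" where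
  "sombor E = (\<Sum>e\<in>E. sqrt (\<Sum>w\<in>e. (real (deg E w))\<^sup>2))"

text \<open>A pendent path u u_1 ... u_k (k >= 1), given as the vertex list [u, u_1, ..., u_k].\<close>
definition pendent_path :: "'a set set \<Rightarrow> 'a list \<Rightarrow> bool" where
  "pendent_path E p \<longleftrightarrow> length p \<ge> 2 \<and> distinct p \<and>
     (\<forall>i < length p - 1. {p ! i, p ! (i + 1)} \<in> E) \<and>
     deg E (hd p) \<ge> 3 \<and> deg E (last p) = 1 \<and>
     (\<forall>i. 0 < i \<and> i < length p - 1 \<longrightarrow> deg E (p ! i) = 2)"

end

theory Submission
  imports Defs
begin

text \<open>Moving the pendent edge \<open>ux\<close> to the leaf \<open>y\<close> changes only the degrees of \<open>u\<close> (down by one)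
  and \<open>y\<close> (from 1 to 2), so every edge away from \<open>y\<close> keeps or loses weight.
  The edge \<open>ux\<close> weighs at least \<open>sqrt (d\<^sub>x\<^sup>2 + 9)\<close> and is replaced by \<open>xy\<close>, weighing at most
  \<open>sqrt (d\<^sub>x\<^sup>2 + 4)\<close> with \<open>d\<^sub>x \<le> 2\<close>, a loss of more than 3/5; the only edge \<open>wy\<close> at the leaf
  grows from \<open>sqrt (d\<^sub>w\<^sup>2 + 1)\<close> to at most \<open>sqrt (d\<^sub>w\<^sup>2 + 4)\<close> with \<open>d\<^sub>w \<ge> 2\<close>, a gain of at most 3/5.
  That \<open>xy\<close> is a new edge distinct from \<open>wy\<close> holds because otherwise the two pendent paths
  would coincide.\<close>

lemma sqrt_exchange_inequality:
  fixes a b :: real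
  assumes "2 \<le> a" "0 \<le> b" "b \<le> 2"
  shows "sqrt (a\<^sup>2 + 4) + sqrt (b\<^sup>2 + 4) < sqrt (a\<^sup>2 + 1) + sqrt (b\<^sup>2 + 9)"
proof -
  have "sqrt (a\<^sup>2 + 4) \<le> sqrt (a\<^sup>2 + 1) + 3/5"
  proof (rule real_le_lsqrt)
    have "sqrt 5 \<le> sqrt (a\<^sup>2 + 1)"
      using power_mono[OF assms(1), of 2] by simp
    moreover have "11/5 \<le> sqrt (5::real)"
      by (rule real_le_rsqrt) (simp add: power2_eq_square)
    ultimately have "11/5 \<le> sqrt (a\<^sup>2 + 1)" by linarith
    then show "a\<^sup>2 + 4 \<le> (sqrt (a\<^sup>2 + 1) + 3/5)\<^sup>2"
      by (simp add: power2_eq_square algebra_simps)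
  qed simp_all
  moreover have "sqrt (b\<^sup>2 + 4) + 3/5 < sqrt (b\<^sup>2 + 9)"
  proof (rule real_less_rsqrt)
    have "sqrt (b\<^sup>2 + 4) \<le> sqrt 8"
      using power_mono[OF assms(3) assms(2), of 2] by simp
    moreover have "sqrt (8::real) \<le> 283/100"
      by (rule real_le_lsqrt) (simp_all add: power2_eq_square)
    ultimately have "sqrt (b\<^sup>2 + 4) \<le> 283/100" by linarith
    then show "(sqrt (b\<^sup>2 + 4) + 3/5)\<^sup>2 < b\<^sup>2 + 9"
      by (simp add: power2_eq_square algebra_simps)
  qed
  ultimately show ?thesis by linarith
qed

lemma simple_graph_finite_edges:
  assumes "simple_graph V E" shows "finite E"
proof (rule finite_subset)
  show "E \<subseteq> Pow V"
  proof
    fix e assume "e \<in> E"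
    then obtain a b where "e = {a, b}" "a \<in> V" "b \<in> V"
      using assms unfolding simple_graph_def by blast
    then show "e \<in> Pow V" by simp
  qed
  show "finite (Pow V)" using assms unfolding simple_graph_def by simp
qed

lemma deg_mono: "finite E \<Longrightarrow> F \<subseteq> E \<Longrightarrow> deg F z \<le> deg E z"
  unfolding deg_def by (rule card_mono) auto

lemma deg_insert_le: "finite E \<Longrightarrow> deg (insert e E) z \<le> Suc (deg E z)"
proof -
  assume "finite E"
  have "deg (insert e E) z \<le> card (insert e {f \<in> E. z \<in> f})"
    unfolding deg_def using \<open>finite E\<close> by (intro card_mono) auto
  also have "\<dots> \<le> Suc (deg E z)"
    unfolding deg_def using \<open>finite E\<close> by (simp add: card_insert_le_m1)
  finally show ?thesis .
qed

lemma deg_insert_nonmember: "z \<notin> e \<Longrightarrow> deg (insert e E) z = deg E z"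
  unfolding deg_def by (metis (lifting) insert_iff)

lemma deg_remove_edge:
  "finite E \<Longrightarrow> e \<in> E \<Longrightarrow> z \<in> e \<Longrightarrow> deg (E - {e}) z = deg E z - 1"
proof -
  assume "finite E" "e \<in> E" "z \<in> e"
  then have "{f \<in> E - {e}. z \<in> f} = {f \<in> E. z \<in> f} - {e}" "e \<in> {f \<in> E. z \<in> f}" by auto
  then show ?thesis unfolding deg_def by simp
qed

lemma deg_move_edge_le:
  assumes "finite E" "e \<in> E" "z \<in> e' \<Longrightarrow> z \<in> e"
  shows "deg (E - {e} \<union> {e'}) z \<le> deg E z"
proof (cases "z \<in> e'")
  case True
  have "0 < deg E z"
    unfolding deg_def using assms True by (auto simp: card_gt_0_iff)
  moreover have "deg (insert e' (E - {e})) z \<le> Suc (deg (E - {e}) z)"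
    using assms(1) by (simp add: deg_insert_le)
  ultimately show ?thesis using assms True by (simp add: deg_remove_edge)
next
  case False
  then show ?thesis using assms(1) by (simp add: deg_insert_nonmember deg_mono)
qed

lemma deg_move_edge_le_Suc: "finite E \<Longrightarrow> deg (E - {e} \<union> {e'}) z \<le> Suc (deg E z)"
proof -
  assume "finite E"
  then have "deg (insert e' (E - {e})) z \<le> Suc (deg (E - {e}) z)" by (simp add: deg_insert_le)
  also have "\<dots> \<le> Suc (deg E z)" using \<open>finite E\<close> by (simp add: deg_mono)
  finally show ?thesis by simp
qed

lemma edges_at_eq_if_card:
  assumes "deg E z = card F" "F \<subseteq> {e \<in> E. z \<in> e}" "finite F" "F \<noteq> {}"
  shows "{e \<in> E. z \<in> e} = F"
proof -
  have "finite {e \<in> E. z \<in> e}" using assms by (metis card_gt_0_iff deg_def)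
  then show ?thesis using assms by (metis card_subset_eq deg_def)
qed

lemma neighbour_of_deg_2:
  assumes "{e \<in> E. z \<in> e} = {{a, z}, {z, b}}" "{z, c} \<in> E" "c \<noteq> z"
  shows "c = a \<or> c = b"
proof -
  have "{z, c} \<in> {e \<in> E. z \<in> e}" using assms(2) by simp
  then have "{z, c} = {a, z} \<or> {z, c} = {z, b}" unfolding assms(1) by simp
  then show ?thesis using assms(3) by (auto simp: doubleton_eq_iff)
qed

definition edge_sombor :: "'a set set \<Rightarrow> 'a set \<Rightarrow> real" where
  "edge_sombor E e = sqrt (\<Sum>w\<in>e. (real (deg E w))\<^sup>2)"

lemma sombor_eq_sum_edge_sombor: "sombor E = (\<Sum>e\<in>E. edge_sombor E e)"
  unfolding sombor_def edge_sombor_def ..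

lemma edge_sombor_doubleton:
  "a \<noteq> b \<Longrightarrow> edge_sombor E {a, b} = sqrt ((real (deg E a))\<^sup>2 + (real (deg E b))\<^sup>2)"
  unfolding edge_sombor_def by simp

lemma edge_sombor_mono:
  "(\<And>z. z \<in> e \<Longrightarrow> deg F z \<le> deg E z) \<Longrightarrow> edge_sombor F e \<le> edge_sombor E e"
  unfolding edge_sombor_def by (intro real_sqrt_le_mono sum_mono power_mono) auto

lemma sombor_move_edge_to_leaf_less:
  assumes fin: "finite E" and ux: "{u, x} \<in> E" and wy: "{w, y} \<in> E"
    and xy: "{x, y} \<notin> E" "x \<noteq> y"
    and du: "3 \<le> deg E u" and dx: "deg E x \<le> 2" and dw: "2 \<le> deg E w" and dy: "deg E y = 1"
  shows "sombor (E - {{u, x}} \<union> {{x, y}}) < sombor E"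
proof -
  define E' where "E' = E - {{u, x}} \<union> {{x, y}}"
  define R where "R = E - {{u, x}, {w, y}}"
  have "u \<noteq> x" "w \<noteq> y" "u \<noteq> y" using du dx dw dy by auto
  have edges_at_y: "{e \<in> E. y \<in> e} = {{w, y}}"
    using dy wy by (intro edges_at_eq_if_card) auto
  have "{u, x} \<noteq> {w, y}" "{x, y} \<noteq> {w, y}"
    using \<open>u \<noteq> y\<close> xy wy by (auto simp: doubleton_eq_iff)
  then have E_split: "E = insert {u, x} (insert {w, y} R)"
    and E'_split: "E' = insert {x, y} (insert {w, y} R)"
    and "{u, x} \<notin> insert {w, y} R" "{x, y} \<notin> insert {w, y} R" "{w, y} \<notin> R"
    using ux wy xy unfolding E'_def R_def by auto
  have "finite R" using fin R_def by simp
  have sum_E: "sum f E = f {u, x} + f {w, y} + sum f R"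
    and sum_E': "sum f E' = f {x, y} + f {w, y} + sum f R" for f :: "'a set \<Rightarrow> real"
    using \<open>finite R\<close> \<open>{u, x} \<notin> insert {w, y} R\<close> \<open>{x, y} \<notin> insert {w, y} R\<close> \<open>{w, y} \<notin> R\<close>
    by (subst E_split E'_split, simp add: add.assoc)+
  have deg_E': "deg E' z \<le> deg E z" if "z \<noteq> y" for z
    unfolding E'_def using fin ux that by (intro deg_move_edge_le) auto
  have "deg E' y \<le> 2"
    using deg_move_edge_le_Suc[OF fin, of "{u, x}" "{x, y}" y] dy unfolding E'_def by simp
  then have dy': "(real (deg E' y))\<^sup>2 \<le> 4"
    using power_mono[of "real (deg E' y)" 2 2] by simp
  have rest: "(\<Sum>e\<in>R. edge_sombor E' e) \<le> (\<Sum>e\<in>R. edge_sombor E e)"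
  proof (intro sum_mono edge_sombor_mono deg_E')
    fix e z assume "e \<in> R" "z \<in> e"
    then show "z \<noteq> y" using edges_at_y unfolding R_def by auto
  qed
  have "edge_sombor E' {x, y} \<le> sqrt ((real (deg E x))\<^sup>2 + 4)"
    using deg_E'[of x] dy' xy
    by (auto simp: edge_sombor_doubleton intro!: add_mono power_mono)
  moreover have "sqrt ((real (deg E x))\<^sup>2 + 9) \<le> edge_sombor E {u, x}"
    using du power_mono[of 3 "real (deg E u)" 2] \<open>u \<noteq> x\<close> by (simp add: edge_sombor_doubleton)
  moreover have "edge_sombor E' {w, y} \<le> sqrt ((real (deg E w))\<^sup>2 + 4)"
    using deg_E'[of w] dy' \<open>w \<noteq> y\<close>
    by (auto simp: edge_sombor_doubleton intro!: add_mono power_mono)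
  moreover have "edge_sombor E {w, y} = sqrt ((real (deg E w))\<^sup>2 + 1)"
    using dy \<open>w \<noteq> y\<close> by (simp add: edge_sombor_doubleton)
  moreover have "sqrt ((real (deg E w))\<^sup>2 + 4) + sqrt ((real (deg E x))\<^sup>2 + 4)
      < sqrt ((real (deg E w))\<^sup>2 + 1) + sqrt ((real (deg E x))\<^sup>2 + 9)"
    using dw dx by (intro sqrt_exchange_inequality) auto
  ultimately have "edge_sombor E' {x, y} + edge_sombor E' {w, y}
      < edge_sombor E {u, x} + edge_sombor E {w, y}"
    by (simp add: add.commute)
  with rest show ?thesis
    unfolding E'_def[symmetric] sombor_eq_sum_edge_sombor sum_E sum_E' by linarith
qed

lemma pendent_path_length: "pendent_path E p \<Longrightarrow> 2 \<le> length p"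
  unfolding pendent_path_def by simp

lemma pendent_path_nonempty: "pendent_path E p \<Longrightarrow> p \<noteq> []"
  using pendent_path_length by fastforce

lemma pendent_path_distinct: "pendent_path E p \<Longrightarrow> distinct p"
  unfolding pendent_path_def by simp

lemma pendent_path_edge: "pendent_path E p \<Longrightarrow> Suc i < length p \<Longrightarrow> {p ! i, p ! Suc i} \<in> E"
  unfolding pendent_path_def by simp

lemma pendent_path_last_edge:
  assumes "pendent_path E p" shows "{p ! (length p - 2), last p} \<in> E"
proof -
  have "Suc (length p - 2) = length p - 1" "length p - 1 < length p"
    using pendent_path_length[OF assms] by auto
  then show ?thesis
    using pendent_path_edge[OF assms, of "length p - 2"] pendent_path_nonempty[OF assms]
    by (simp add: last_conv_nth)
qed

lemma pendent_path_deg_hd: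
  assumes "pendent_path E p" shows "3 \<le> deg E (p ! 0)"
  using assms pendent_path_nonempty[OF assms] unfolding pendent_path_def by (simp add: hd_conv_nth)

lemma pendent_path_deg_last: "pendent_path E p \<Longrightarrow> deg E (last p) = 1"
  unfolding pendent_path_def by simp

lemma pendent_path_deg_nth:
  assumes "pendent_path E p" "0 < i" "i < length p"
  shows "deg E (p ! i) = (if i = length p - 1 then 1 else 2)"
  using assms pendent_path_nonempty[OF assms(1)] unfolding pendent_path_def
  by (auto simp: last_conv_nth)

lemma pendent_path_deg_le_2:
  "pendent_path E p \<Longrightarrow> 0 < i \<Longrightarrow> i < length p \<Longrightarrow> deg E (p ! i) \<le> 2"
  using pendent_path_deg_nth[of E p i] by simp

lemma pendent_path_deg_ge_2:
  "pendent_path E p \<Longrightarrow> i < length p - 1 \<Longrightarrow> 2 \<le> deg E (p ! i)"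
  using pendent_path_deg_hd[of E p] pendent_path_deg_nth[of E p i] by (cases "i = 0") auto

lemma pendent_path_index_eq_0_if_deg_ge_3:
  "pendent_path E p \<Longrightarrow> i < length p \<Longrightarrow> 3 \<le> deg E (p ! i) \<Longrightarrow> i = 0"
  using pendent_path_deg_le_2[of E p i] by (cases "i = 0") auto

lemma pendent_path_index_eq_last_if_deg_1:
  "pendent_path E p \<Longrightarrow> i < length p \<Longrightarrow> deg E (p ! i) = 1 \<Longrightarrow> i = length p - 1"
proof -
  assume p: "pendent_path E p" "i < length p" "deg E (p ! i) = 1"
  have "i \<noteq> 0" using p(3) pendent_path_deg_hd[OF p(1)] by (cases i) auto
  then have "deg E (p ! i) = (if i = length p - 1 then 1 else 2)"
    using pendent_path_deg_nth[OF p(1)] p(2) by simp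
  then show "i = length p - 1" using p(3) by (cases "i = length p - 1") auto
qed

lemma pendent_paths_eq_if_second_is_last:
  assumes P: "pendent_path E P" and Q: "pendent_path E Q" and x: "P ! 1 = last Q"
  shows "P = Q"
proof -
  obtain n where n: "length Q = Suc (Suc n)"
    using pendent_path_length[OF Q] by (metis add_2_eq_Suc le_Suc_ex)
  have y: "last Q = Q ! Suc n"
    using n pendent_path_nonempty[OF Q] by (simp add: last_conv_nth)
  have "deg E (P ! 1) = 1"
    using pendent_path_deg_last[OF Q] x by simp
  then have m: "length P = 2"
    using pendent_path_index_eq_last_if_deg_1[OF P, of 1] pendent_path_length[OF P] by simp
  have "{e \<in> E. P ! 1 \<in> e} = {{Q ! n, P ! 1}}"
    using pendent_path_last_edge[OF Q] \<open>deg E (P ! 1) = 1\<close> n x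
    by (intro edges_at_eq_if_card) auto
  moreover have "{P ! 0, P ! 1} \<in> {e \<in> E. P ! 1 \<in> e}"
    using pendent_path_edge[OF P, of 0] m by simp
  ultimately have "{P ! 0, P ! 1} = {Q ! n, P ! 1}"
    by simp
  moreover have "P ! 0 \<noteq> P ! 1"
    using pendent_path_deg_hd[OF P] \<open>deg E (P ! 1) = 1\<close> by auto
  ultimately have "P ! 0 = Q ! n"
    by (simp add: doubleton_eq_iff)
  then have "n = 0"
    using pendent_path_index_eq_0_if_deg_ge_3[OF Q, of n] pendent_path_deg_hd[OF P] n by simp
  show "P = Q"
  proof (rule nth_equalityI)
    show "length P = length Q" using m n \<open>n = 0\<close> by simp
    fix i assume "i < length P"
    then have "i = 0 \<or> i = 1" using m by auto
    then show "P ! i = Q ! i" using \<open>P ! 0 = Q ! n\<close> \<open>n = 0\<close> x y by auto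
  qed
qed

lemma pendent_paths_eq_if_second_is_next_to_last:
  assumes P: "pendent_path E P" and Q: "pendent_path E Q" and x: "P ! 1 = Q ! (length Q - 2)"
  shows "P = Q"
proof -
  obtain n where n: "length Q = Suc (Suc n)"
    using pendent_path_length[OF Q] by (metis add_2_eq_Suc le_Suc_ex)
  have x: "P ! 1 = Q ! n" using x n by simp
  have "deg E (P ! 1) \<le> 2"
    using pendent_path_deg_le_2[OF P, of 1] pendent_path_length[OF P] by simp
  then obtain k where k: "n = Suc k"
    using pendent_path_deg_hd[OF Q] x by (cases n) auto
  have "deg E (P ! 1) = 2"
    using pendent_path_deg_nth[OF Q, of n] n x k by simp
  then have "2 < length P"
    using pendent_path_deg_nth[OF P, of 1] pendent_path_length[OF P] by (cases "length P = 2") auto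
  have "P ! 0 \<noteq> P ! 2"
    using pendent_path_deg_hd[OF P] pendent_path_deg_le_2[OF P, of 2] \<open>2 < length P\<close> by auto
  then have "card {{P ! 0, P ! 1}, {P ! 1, P ! 2}} = 2"
    by (auto simp: card_insert_if doubleton_eq_iff)
  moreover have "{P ! 0, P ! 1} \<in> E" "{P ! 1, P ! 2} \<in> E"
    using pendent_path_edge[OF P, of 0] pendent_path_edge[OF P, of 1] \<open>2 < length P\<close>
    by (simp_all add: numeral_2_eq_2)
  ultimately have edges_at_x: "{e \<in> E. P ! 1 \<in> e} = {{P ! 0, P ! 1}, {P ! 1, P ! 2}}"
    using \<open>deg E (P ! 1) = 2\<close> by (intro edges_at_eq_if_card) auto
  have "deg E (Q ! Suc n) = 1" "2 \<le> deg E (Q ! k)"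
    using pendent_path_deg_nth[OF Q, of "Suc n"] pendent_path_deg_ge_2[OF Q, of k] n k by auto
  have "{P ! 1, Q ! Suc n} \<in> E"
    using pendent_path_edge[OF Q, of n] n x by simp
  moreover have "Q ! Suc n \<noteq> P ! 1" "Q ! Suc n \<noteq> P ! 0"
    using \<open>deg E (Q ! Suc n) = 1\<close> \<open>deg E (P ! 1) = 2\<close> pendent_path_deg_hd[OF P] by auto
  ultimately have "Q ! Suc n = P ! 2"
    using neighbour_of_deg_2[OF edges_at_x] by blast
  have "{P ! 1, Q ! k} \<in> E"
    using pendent_path_edge[OF Q, of k] n k x by (simp add: insert_commute)
  moreover have "Q ! k \<noteq> P ! 1"
    using pendent_path_distinct[OF Q] n k x by (simp add: nth_eq_iff_index_eq)
  moreover have "Q ! k \<noteq> P ! 2"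
    using \<open>deg E (Q ! Suc n) = 1\<close> \<open>2 \<le> deg E (Q ! k)\<close> \<open>Q ! Suc n = P ! 2\<close> by auto
  ultimately have "Q ! k = P ! 0"
    using neighbour_of_deg_2[OF edges_at_x] by blast
  have "length P = 3"
    using pendent_path_index_eq_last_if_deg_1[OF P, of 2] \<open>2 < length P\<close>
      \<open>deg E (Q ! Suc n) = 1\<close> \<open>Q ! Suc n = P ! 2\<close> by simp
  have "k = 0"
    using pendent_path_index_eq_0_if_deg_ge_3[OF Q, of k] pendent_path_deg_hd[OF P]
      \<open>Q ! k = P ! 0\<close> n k by simp
  then have "n = 1" "length Q = 3" using k n by simp_all
  show "P = Q"
  proof (rule nth_equalityI)
    show "length P = length Q" using \<open>length P = 3\<close> \<open>length Q = 3\<close> by simp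
    fix i assume "i < length P"
    then have "i = 0 \<or> i = 1 \<or> i = 2" using \<open>length P = 3\<close> by auto
    then show "P ! i = Q ! i"
      using x \<open>n = 1\<close> \<open>Q ! Suc n = P ! 2\<close> \<open>Q ! k = P ! 0\<close> \<open>k = 0\<close> by (auto simp: numeral_2_eq_2)
  qed
qed

lemma pendent_paths_second_not_adjacent_last:
  assumes P: "pendent_path E P" and Q: "pendent_path E Q" and "P \<noteq> Q"
  shows "{P ! 1, last Q} \<notin> E"
proof
  assume "{P ! 1, last Q} \<in> E"
  then have "{P ! 1, last Q} \<in> {e \<in> E. last Q \<in> e}" by simp
  moreover have "{e \<in> E. last Q \<in> e} = {{Q ! (length Q - 2), last Q}}"
    using pendent_path_last_edge[OF Q] pendent_path_deg_last[OF Q] by (intro edges_at_eq_if_card) simp_all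
  ultimately have "P ! 1 = Q ! (length Q - 2) \<or> P ! 1 = last Q"
    by (auto simp: doubleton_eq_iff)
  then show False
    using pendent_paths_eq_if_second_is_next_to_last[OF P Q]
      pendent_paths_eq_if_second_is_last[OF P Q] \<open>P \<noteq> Q\<close> by blast
qed

theorem lemma2p1:
  fixes V :: "'a set" and E :: "'a set set" and P Q :: "'a list"
  assumes "simple_graph V E"
    and "connected_graph V E"
    and "pendent_path E P"
    and "pendent_path E Q"
    and "P \<noteq> Q"
  shows "sombor (E - {{hd P, P ! 1}} \<union> {{P ! 1, last Q}}) < sombor E"
proof -
  have "hd P = P ! 0" using pendent_path_nonempty[OF assms(3)] by (simp add: hd_conv_nth)
  then have "{hd P, P ! 1} \<in> E" "3 \<le> deg E (hd P)" "deg E (P ! 1) \<le> 2"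
    using pendent_path_edge[OF assms(3), of 0] pendent_path_deg_hd[OF assms(3)]
      pendent_path_deg_le_2[OF assms(3), of 1] pendent_path_length[OF assms(3)] by auto
  moreover have "{Q ! (length Q - 2), last Q} \<in> E" "2 \<le> deg E (Q ! (length Q - 2))"
    "deg E (last Q) = 1"
    using pendent_path_last_edge[OF assms(4)] pendent_path_deg_ge_2[OF assms(4)]
      pendent_path_length[OF assms(4)] pendent_path_deg_last[OF assms(4)] by simp_all
  moreover have "P ! 1 \<noteq> last Q"
    using pendent_paths_eq_if_second_is_last[OF assms(3,4)] assms(5) by blast
  ultimately show ?thesis
    using sombor_move_edge_to_leaf_less[OF simple_graph_finite_edges[OF assms(1)]]
      pendent_paths_second_not_adjacent_last[OF assms(3-5)] by blast
qed

end
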